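(* Let $K=1$ (a control arm $0$ and one arm $1$), $J\ge1$, and suppose $\nu_{a,i}=\mathcal N(\mu_{a,i},\sigma_{a,i}^2)$ with known $\sigma_{a,i}>0$, and $\boldsymbol\mu\in\mathcal L$. Let $\Delta_1=\mu_0-\mu_1$. Then: (1) $T^\star_{\mathrm{agnostic}}(\boldsymbol\mu)=\dfrac{2\left(\sqrt{\sum_{i=1}^J\beta_i^2\sigma_{0,i}^2/\alpha_i}+\sqrt{\sum_{i=1}^J\beta_i^2\sigma_{1,i}^2/\alpha_i}\right)^2}{\Delta_1^2}$, attained at $w^\star_{a,i}=\dfrac{\alpha_i\sqrt{\sum_{j}\beta_j^2\sigma_{a,j}^2/\alpha_j}}{\sqrt{\sum_j\beta_j^2\sigma_{0,j}^2/\alpha_j}+\sqrt{\sum_j\beta_j^2\sigma_{1,j}^2/\alpha_j}}$; (2) $T^\star_{\mathrm{prop}}(\boldsymbol\mu)=\dfrac{2\sum_{i=1}^J\frac{\beta_i^2}{\alpha_i}(\sigma_{0,i}+\sigma_{1,i})^2}{\Delta_1^2}$, attained at $w^\star_{a,i}=\dfrac{\alpha_i\sigma_{a,i}}{\sigma_{0,i}+\sigma_{1,i}}$ for all $i\le J$, $a\in\{0,1\}$; (3) $T^\star_{\mathrm{active}}(\boldsymbol\mu)=\dfrac{2\left(\sum_{i=1}^J|\beta_i|(\sigma_{0,i}+\sigma_{1,i})\right)^2}{\Delta_1^2}$, attained at $w^\star_{a,i}=\dfrac{|\beta_i|\sigma_{a,i}}{\sum_{j=1}^J|\beta_j|(\sigma_{0,j}+\sigma_{1,j})}$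 for all $i\le J$, $a\in\{0,1\}$.
   Context: Arms $a\in\{0,1\}$ (arm $0$ is the control), subpopulations $i\in[J]$; means $\boldsymbol\mu=(\mu_{a,i})$. Known $\boldsymbol\beta\in\mathbb R^J$ and known $\boldsymbol\alpha\in\Sigma_J$ with $\alpha_i>0$ ($\Sigma_n$ the probability simplex). Weighted means $\mu_a=\sum_i\beta_i\mu_{a,i}$, $\lambda_a=\sum_i\beta_i\lambda_{a,i}$. For the Gaussian model, $d_{a,i}(x,y)=(x-y)^2/(2\sigma_{a,i}^2)$ is the KL divergence between $\mathcal N(x,\sigma_{a,i}^2)$ and $\mathcal N(y,\sigma_{a,i}^2)$. $\mathcal L$ is the set of $\boldsymbol\mu\in\mathbb R^{2\times J}$ with $\mu_1\ne\mu_0$; $\mathcal S_{\boldsymbol\beta}(\boldsymbol\mu)=\{a\in\{1\}:\mu_a>\mu_0\}$ and $\mathrm{Alt}_{\boldsymbol\beta}(\boldsymbol\mu)=\{\boldsymbol\lambda\in\mathcal L:\mathcal S_{\boldsymbol\beta}(\boldsymbol\lambda)\ne\mathcal S_{\boldsymbol\beta}(\boldsymbol\mu)\}$. For a constraint set $\mathcal C$, $T^\star(\boldsymbol\mu)^{-1}=\sup_{\mathbf w\in\mathcal C}\inf_{\boldsymbol\lambda\in\mathrm{Alt}_{\boldsymbol\beta}(\boldsymbol\mu)}\sum_{a=0}^1\sum_{i=1}^J w_{a,i}\,d_{a,i}(\mu_{a,i},\lambda_{a,i})$, and $T^\star_{\mathrm{active}},T^\star_{\mathrm{prop}},T^\star_{\mathrm{agnostic}}$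 use respectively $\mathcal C_{\mathrm{active}}=\Sigma_{2J}$, $\mathcal C_{\mathrm{prop}}=\{\mathbf w\in\Sigma_{2J}:w_{0,i}+w_{1,i}=\alpha_i\ \forall i\}$, $\mathcal C_{\mathrm{agnostic}}=\{\mathbf w:w_{a,i}=\alpha_iu_a,\ \mathbf u\in\Sigma_2\}$. "Attained at $\mathbf w^\star$" means $\mathbf w^\star$ belongs to the constraint set and achieves the supremum. *)

theory Defs
  imports Complex_Main
begin

text \<open>Arms are 0 (control) and 1; subpopulations are 1..J.
  Mean matrices, weights, variances are functions nat => nat => real,
  indexed as (arm, subpopulation); values outside the index range are irrelevant.\<close>

definition arms :: "nat set" where "arms = {0, 1}"

definition gauss_kl :: "(nat \<Rightarrow> nat \<Rightarrow> real) \<Rightarrow> nat \<Rightarrow> nat \<Rightarrow> real \<Rightarrow> real \<Rightarrow> real" where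
  "gauss_kl \<sigma> a i x y = (x - y)^2 / (2 * (\<sigma> a i)^2)"

definition wmean :: "nat \<Rightarrow> (nat \<Rightarrow> real) \<Rightarrow> (nat \<Rightarrow> nat \<Rightarrow> real) \<Rightarrow> nat \<Rightarrow> real" where
  "wmean J \<beta> m a = (\<Sum>i\<in>{1..J}. \<beta> i * m a i)"

definition LL :: "nat \<Rightarrow> (nat \<Rightarrow> real) \<Rightarrow> (nat \<Rightarrow> nat \<Rightarrow> real) set" where
  "LL J \<beta> = {m. wmean J \<beta> m 1 \<noteq> wmean J \<beta> m 0}"

definition Sset :: "nat \<Rightarrow> (nat \<Rightarrow> real) \<Rightarrow> (nat \<Rightarrow> nat \<Rightarrow> real) \<Rightarrow> nat set" where
  "Sset J \<beta> m = {a\<in>{1}. wmean J \<beta> m a > wmean J \<beta> m 0}"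

definition Alt :: "nat \<Rightarrow> (nat \<Rightarrow> real) \<Rightarrow> (nat \<Rightarrow> nat \<Rightarrow> real) \<Rightarrow> (nat \<Rightarrow> nat \<Rightarrow> real) set" where
  "Alt J \<beta> m = {l \<in> LL J \<beta>. Sset J \<beta> l \<noteq> Sset J \<beta> m}"

definition objective :: "nat \<Rightarrow> (nat \<Rightarrow> real) \<Rightarrow> (nat \<Rightarrow> nat \<Rightarrow> real) \<Rightarrow> (nat \<Rightarrow> nat \<Rightarrow> real)
    \<Rightarrow> (nat \<Rightarrow> nat \<Rightarrow> real) \<Rightarrow> real" where
  "objective J \<beta> \<sigma> m w =
     (INF l\<in>Alt J \<beta> m. \<Sum>a\<in>arms. \<Sum>i\<in>{1..J}. w a i * gauss_kl \<sigma> a i (m a i) (l a i))"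

definition Tstar_inv :: "nat \<Rightarrow> (nat \<Rightarrow> real) \<Rightarrow> (nat \<Rightarrow> nat \<Rightarrow> real) \<Rightarrow> (nat \<Rightarrow> nat \<Rightarrow> real) set
    \<Rightarrow> (nat \<Rightarrow> nat \<Rightarrow> real) \<Rightarrow> real" where
  "Tstar_inv J \<beta> \<sigma> C m = (SUP w\<in>C. objective J \<beta> \<sigma> m w)"

definition Tstar :: "nat \<Rightarrow> (nat \<Rightarrow> real) \<Rightarrow> (nat \<Rightarrow> nat \<Rightarrow> real) \<Rightarrow> (nat \<Rightarrow> nat \<Rightarrow> real) set
    \<Rightarrow> (nat \<Rightarrow> nat \<Rightarrow> real) \<Rightarrow> real" where
  "Tstar J \<beta> \<sigma> C m = inverse (Tstar_inv J \<beta> \<sigma> C m)"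

definition attained :: "nat \<Rightarrow> (nat \<Rightarrow> real) \<Rightarrow> (nat \<Rightarrow> nat \<Rightarrow> real) \<Rightarrow> (nat \<Rightarrow> nat \<Rightarrow> real) set
    \<Rightarrow> (nat \<Rightarrow> nat \<Rightarrow> real) \<Rightarrow> (nat \<Rightarrow> nat \<Rightarrow> real) \<Rightarrow> bool" where
  "attained J \<beta> \<sigma> C m w \<longleftrightarrow> w \<in> C \<and> objective J \<beta> \<sigma> m w = Tstar_inv J \<beta> \<sigma> C m"

definition C_active :: "nat \<Rightarrow> (nat \<Rightarrow> nat \<Rightarrow> real) set" where
  "C_active J = {w. (\<forall>a\<in>arms. \<forall>i\<in>{1..J}. w a i \<ge> 0) \<and> (\<Sum>a\<in>arms. \<Sum>i\<in>{1..J}. w a i) = 1}"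

definition C_prop :: "nat \<Rightarrow> (nat \<Rightarrow> real) \<Rightarrow> (nat \<Rightarrow> nat \<Rightarrow> real) set" where
  "C_prop J \<alpha> = {w \<in> C_active J. \<forall>i\<in>{1..J}. w 0 i + w 1 i = \<alpha> i}"

definition C_agnostic :: "nat \<Rightarrow> (nat \<Rightarrow> real) \<Rightarrow> (nat \<Rightarrow> nat \<Rightarrow> real) set" where
  "C_agnostic J \<alpha> = {w. \<exists>u::nat \<Rightarrow> real. u 0 \<ge> 0 \<and> u 1 \<ge> 0 \<and> u 0 + u 1 = 1 \<and>
       (\<forall>a\<in>arms. \<forall>i\<in>{1..J}. w a i = \<alpha> i * u a)}"

end

theory Submission
  imports Defs
begin

text \<open>
  Write V(w) = sum_i \<beta>_i^2 (\<sigma>_0i^2 / w_0i + \<sigma>_1i^2 / w_1i) for the variance of the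
  weighted gap estimate under the allocation w. Completing squares termwise (weak duality for
  the linear constraint on the gap) shows that every alternative costs at least \<Delta>^2 / (2 V(w)),
  and moving the means against the gap along \<sigma>^2 \<beta> / w shows that this is the infimum.
  For the upper bound on the supremum over a constraint set C we test every w \<in> C on the
  alternatives built from the candidate w*: their cost is governed by the derivative of V at
  w* in direction w, so objective(w) \<le> \<Delta>^2 / (2 V(w*)) as soon as w* satisfies the
  first-order optimality condition for V on C; no convexity argument is needed. For the three
  stated allocations this condition is an elementary identity (for the active set an
  inequality that is tight exactly on the support of \<beta>).
\<close>

lemma sum_arms: "(\<Sum>a\<in>arms. f a) = f 0 + f (1::nat)"
  by (simp add: arms_def)

abbreviation gap :: "nat \<Rightarrow> (nat \<Rightarrow> real) \<Rightarrow> (nat \<Rightarrow> nat \<Rightarrow> real) \<Rightarrow> real" where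
  "gap J \<beta> m \<equiv> wmean J \<beta> m 1 - wmean J \<beta> m 0"

lemma gap_eq_sum: "gap J \<beta> m = (\<Sum>i\<in>{1..J}. \<beta> i * (m 1 i - m 0 i))"
  by (simp add: wmean_def sum_subtractf[symmetric] algebra_simps)

lemma LL_imp_beta_nonzero:
  assumes "m \<in> LL J \<beta>"
  obtains i where "i \<in> {1..J}" "\<beta> i \<noteq> 0"
proof -
  from assms have "(\<Sum>i\<in>{1..J}. \<beta> i * m 1 i) \<noteq> (\<Sum>i\<in>{1..J}. \<beta> i * m 0 i)"
    by (simp add: LL_def wmean_def)
  then have "\<exists>i\<in>{1..J}. \<beta> i \<noteq> 0"
    by (metis (no_types, lifting) mult_zero_left sum.neutral)
  with that show thesis by blast
qed

lemma Alt_iff_gap_sign: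
  assumes "\<mu> \<in> LL J \<beta>"
  shows "l \<in> Alt J \<beta> \<mu> \<longleftrightarrow> gap J \<beta> \<mu> * gap J \<beta> l < 0"
proof -
  have "Sset J \<beta> m = (if gap J \<beta> m > 0 then {1} else {})" for m
    by (auto simp: Sset_def)
  then show ?thesis
    using assms by (auto simp: Alt_def LL_def mult_less_0_iff)
qed

definition gap_variance ::
    "nat \<Rightarrow> (nat \<Rightarrow> real) \<Rightarrow> (nat \<Rightarrow> nat \<Rightarrow> real) \<Rightarrow> (nat \<Rightarrow> nat \<Rightarrow> real) \<Rightarrow> real" where
  "gap_variance J \<beta> \<sigma> w = (\<Sum>i\<in>{1..J}. (\<beta> i)^2 * ((\<sigma> 0 i)^2 / w 0 i + (\<sigma> 1 i)^2 / w 1 i))"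

text \<open>Minus the derivative of gap_variance at ws in direction w. Since
  gap_variance_slope J \<beta> \<sigma> ws ws = gap_variance J \<beta> \<sigma> ws, the bound
  gap_variance_slope J \<beta> \<sigma> ws w \<le> gap_variance J \<beta> \<sigma> ws for all w \<in> C is the
  first-order optimality condition for ws on C.\<close>
definition gap_variance_slope :: "nat \<Rightarrow> (nat \<Rightarrow> real) \<Rightarrow> (nat \<Rightarrow> nat \<Rightarrow> real)
    \<Rightarrow> (nat \<Rightarrow> nat \<Rightarrow> real) \<Rightarrow> (nat \<Rightarrow> nat \<Rightarrow> real) \<Rightarrow> real" where
  "gap_variance_slope J \<beta> \<sigma> ws w =
     (\<Sum>i\<in>{1..J}. (\<beta> i)^2 * (w 0 i * (\<sigma> 0 i)^2 / (ws 0 i)^2 + w 1 i * (\<sigma> 1 i)^2 / (ws 1 i)^2))"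

lemma gap_variance_sum_arms:
  "gap_variance J \<beta> \<sigma> w = (\<Sum>a\<in>arms. \<Sum>i\<in>{1..J}. (\<beta> i)^2 * (\<sigma> a i)^2 / w a i)"
  by (simp add: gap_variance_def sum_arms sum.distrib distrib_left)

lemma gap_variance_slope_sum_arms:
  "gap_variance_slope J \<beta> \<sigma> ws w
     = (\<Sum>a\<in>arms. \<Sum>i\<in>{1..J}. (\<beta> i)^2 * (w a i * (\<sigma> a i)^2 / (ws a i)^2))"
  by (simp add: gap_variance_slope_def sum_arms sum.distrib distrib_left)

text \<open>Needed because gap_variance reads x / 0 as 0 on unsampled cells.\<close>
definition samples_support :: "nat \<Rightarrow> (nat \<Rightarrow> real) \<Rightarrow> (nat \<Rightarrow> nat \<Rightarrow> real) \<Rightarrow> bool" where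
  "samples_support J \<beta> w \<longleftrightarrow> (\<forall>a\<in>arms. \<forall>i\<in>{1..J}. \<beta> i \<noteq> 0 \<longrightarrow> 0 < w a i)"

lemma gap_variance_pos:
  assumes sig: "\<forall>a\<in>arms. \<forall>i\<in>{1..J}. \<sigma> a i > 0"
    and nonneg: "\<forall>a\<in>arms. \<forall>i\<in>{1..J}. 0 \<le> w a i"
    and supp: "samples_support J \<beta> w" and mu: "\<mu> \<in> LL J \<beta>"
  shows "gap_variance J \<beta> \<sigma> w > 0"
proof -
  obtain i0 where i0: "i0 \<in> {1..J}" "\<beta> i0 \<noteq> 0"
    using mu by (rule LL_imp_beta_nonzero)
  show ?thesis unfolding gap_variance_def
  proof (rule sum_pos2[OF _ i0(1)])
    have "0 < \<sigma> 0 i0" "0 < \<sigma> 1 i0" "0 < w 0 i0" "0 < w 1 i0"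
      using i0 sig supp by (auto simp: samples_support_def arms_def)
    then show "0 < (\<beta> i0)^2 * ((\<sigma> 0 i0)^2 / w 0 i0 + (\<sigma> 1 i0)^2 / w 1 i0)"
      using i0(2) by (intro mult_pos_pos add_pos_pos divide_pos_pos) auto
    show "0 \<le> (\<beta> i)^2 * ((\<sigma> 0 i)^2 / w 0 i + (\<sigma> 1 i)^2 / w 1 i)" if "i \<in> {1..J}" for i
      using that nonneg by (auto simp: arms_def)
  qed simp
qed

abbreviation weighted_divergence :: "nat \<Rightarrow> (nat \<Rightarrow> nat \<Rightarrow> real) \<Rightarrow> (nat \<Rightarrow> nat \<Rightarrow> real)
    \<Rightarrow> (nat \<Rightarrow> nat \<Rightarrow> real) \<Rightarrow> (nat \<Rightarrow> nat \<Rightarrow> real) \<Rightarrow> real" where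
  "weighted_divergence J \<sigma> \<mu> w l \<equiv> \<Sum>a\<in>arms. \<Sum>i\<in>{1..J}. w a i * gauss_kl \<sigma> a i (\<mu> a i) (l a i)"

lemma weighted_divergence_nonneg:
  assumes "\<forall>a\<in>arms. \<forall>i\<in>{1..J}. 0 \<le> w a i"
  shows "0 \<le> weighted_divergence J \<sigma> \<mu> w l"
  using assms by (intro sum_nonneg) (auto simp: gauss_kl_def)

lemma mult_le_weighted_squares:
  fixes c x s w :: real
  assumes "s \<noteq> 0" "0 \<le> w" "w = 0 \<Longrightarrow> c = 0"
  shows "c * x \<le> w * x^2 / (2 * s^2) + c^2 * s^2 / (2 * w)"
proof (cases "w = 0")
  case False
  with assms have "0 < w" by simp
  have "2 * w * (w * x^2 / (2 * s^2) + c^2 * s^2 / (2 * w) - c * x) = (w * x / s - c * s)^2"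
    using \<open>0 < w\<close> \<open>s \<noteq> 0\<close> by (simp add: power2_eq_square field_simps)
  then have "0 \<le> 2 * w * (w * x^2 / (2 * s^2) + c^2 * s^2 / (2 * w) - c * x)"
    by simp
  with \<open>0 < w\<close> show ?thesis
    by (simp add: zero_le_mult_iff)
qed (use assms in simp)

text \<open>Weak duality: t is the multiplier of the constraint that fixes the gap of l.\<close>
lemma weighted_divergence_ge_dual:
  assumes sig: "\<forall>a\<in>arms. \<forall>i\<in>{1..J}. \<sigma> a i > 0"
    and nonneg: "\<forall>a\<in>arms. \<forall>i\<in>{1..J}. 0 \<le> w a i"
    and supp: "samples_support J \<beta> w"
  shows "t * (gap J \<beta> \<mu> - gap J \<beta> l) - t^2 / 2 * gap_variance J \<beta> \<sigma> w
    \<le> weighted_divergence J \<sigma> \<mu> w l"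
proof -
  let ?c = "\<lambda>a i. t * (if a = 0 then - \<beta> i else \<beta> i)"
  have "t * (gap J \<beta> \<mu> - gap J \<beta> l) = (\<Sum>a\<in>arms. \<Sum>i\<in>{1..J}. ?c a i * (\<mu> a i - l a i))"
    unfolding gap_eq_sum
    by (simp add: sum_arms sum_distrib_left sum_subtractf[symmetric] sum.distrib[symmetric] algebra_simps)
  moreover have "t^2 / 2 * gap_variance J \<beta> \<sigma> w
      = (\<Sum>a\<in>arms. \<Sum>i\<in>{1..J}. (?c a i)^2 * (\<sigma> a i)^2 / (2 * w a i))"
  proof -
    have c_sq: "(?c a i)^2 = t^2 * (\<beta> i)^2" for a i
      by (cases "a = 0") (simp_all add: power_mult_distrib)
    show ?thesis
      by (simp add: c_sq gap_variance_sum_arms sum_distrib_left mult.assoc)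
  qed
  ultimately have "t * (gap J \<beta> \<mu> - gap J \<beta> l) - t^2 / 2 * gap_variance J \<beta> \<sigma> w
      = (\<Sum>a\<in>arms. \<Sum>i\<in>{1..J}. ?c a i * (\<mu> a i - l a i) - (?c a i)^2 * (\<sigma> a i)^2 / (2 * w a i))"
    by (simp add: sum_subtractf)
  also have "\<dots> \<le> weighted_divergence J \<sigma> \<mu> w l"
  proof (intro sum_mono)
    fix a i assume a: "a \<in> arms" and i: "i \<in> {1..J}"
    have pos: "0 < \<sigma> a i" "0 \<le> w a i"
      using sig nonneg a i by auto
    have "?c a i * (\<mu> a i - l a i)
        \<le> w a i * (\<mu> a i - l a i)^2 / (2 * (\<sigma> a i)^2) + (?c a i)^2 * (\<sigma> a i)^2 / (2 * w a i)"
    proof (rule mult_le_weighted_squares)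
      have "\<beta> i \<noteq> 0 \<Longrightarrow> 0 < w a i"
        using supp a i by (simp add: samples_support_def)
      then show "w a i = 0 \<Longrightarrow> ?c a i = 0"
        by auto
    qed (use pos in auto)
    moreover have "w a i * gauss_kl \<sigma> a i (\<mu> a i) (l a i) = w a i * (\<mu> a i - l a i)^2 / (2 * (\<sigma> a i)^2)"
      by (simp add: gauss_kl_def)
    ultimately show "?c a i * (\<mu> a i - l a i) - (?c a i)^2 * (\<sigma> a i)^2 / (2 * w a i)
        \<le> w a i * gauss_kl \<sigma> a i (\<mu> a i) (l a i)"
      by linarith
  qed
  finally show ?thesis .
qed

lemma weighted_divergence_ge_on_Alt:
  assumes sig: "\<forall>a\<in>arms. \<forall>i\<in>{1..J}. \<sigma> a i > 0"
    and nonneg: "\<forall>a\<in>arms. \<forall>i\<in>{1..J}. 0 \<le> w a i"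
    and supp: "samples_support J \<beta> w"
    and mu: "\<mu> \<in> LL J \<beta>" and l: "l \<in> Alt J \<beta> \<mu>"
  shows "(gap J \<beta> \<mu>)^2 / (2 * gap_variance J \<beta> \<sigma> w) \<le> weighted_divergence J \<sigma> \<mu> w l"
proof -
  define D where "D = gap J \<beta> \<mu>"
  define E where "E = gap J \<beta> l"
  define Q where "Q = gap_variance J \<beta> \<sigma> w"
  have "D * E < 0"
    using l mu by (simp add: Alt_iff_gap_sign D_def E_def)
  have "0 < Q"
    unfolding Q_def using sig nonneg supp mu by (rule gap_variance_pos)
  have "D^2 / (2 * Q) \<le> D^2 / (2 * Q) - D * E / Q"
    using divide_neg_pos[OF \<open>D * E < 0\<close> \<open>0 < Q\<close>] by linarith
  also have "\<dots> = D / Q * (D - E) - (D / Q)^2 / 2 * Q"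
    using \<open>0 < Q\<close> by (simp add: power2_eq_square field_simps)
  also have "\<dots> \<le> weighted_divergence J \<sigma> \<mu> w l"
    unfolding D_def E_def Q_def by (rule weighted_divergence_ge_dual[OF sig nonneg supp])
  finally show ?thesis
    by (simp add: D_def Q_def)
qed

text \<open>For weights w, the cheapest way of moving the gap: each cell moves against it in
  proportion to \<sigma>^2 \<beta> / w.\<close>
definition shifted_means :: "(nat \<Rightarrow> real) \<Rightarrow> (nat \<Rightarrow> nat \<Rightarrow> real) \<Rightarrow> (nat \<Rightarrow> nat \<Rightarrow> real)
    \<Rightarrow> (nat \<Rightarrow> nat \<Rightarrow> real) \<Rightarrow> real \<Rightarrow> nat \<Rightarrow> nat \<Rightarrow> real" where
  "shifted_means \<beta> \<sigma> \<mu> w k a i = \<mu> a i - k * (if a = 0 then - \<beta> i else \<beta> i) * (\<sigma> a i)^2 / w a i"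

lemma gap_shifted_means:
  "gap J \<beta> (shifted_means \<beta> \<sigma> \<mu> w k) = gap J \<beta> \<mu> - k * gap_variance J \<beta> \<sigma> w"
proof -
  have "gap J \<beta> (shifted_means \<beta> \<sigma> \<mu> w k)
      = (\<Sum>i\<in>{1..J}. \<beta> i * (\<mu> 1 i - \<mu> 0 i) - k * ((\<beta> i)^2 * ((\<sigma> 0 i)^2 / w 0 i + (\<sigma> 1 i)^2 / w 1 i)))"
    unfolding gap_eq_sum
    by (rule sum.cong) (simp_all add: shifted_means_def power2_eq_square algebra_simps add_divide_distrib)
  also have "\<dots> = (\<Sum>i\<in>{1..J}. \<beta> i * (\<mu> 1 i - \<mu> 0 i)) - k * gap_variance J \<beta> \<sigma> w"
    by (simp add: gap_variance_def sum_subtractf sum_distrib_left)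
  finally show ?thesis
    by (simp only: gap_eq_sum)
qed

lemma shifted_means_in_Alt:
  assumes mu: "\<mu> \<in> LL J \<beta>" and Q: "gap_variance J \<beta> \<sigma> w \<noteq> 0" and "1 < \<tau>"
  shows "shifted_means \<beta> \<sigma> \<mu> w (\<tau> * gap J \<beta> \<mu> / gap_variance J \<beta> \<sigma> w) \<in> Alt J \<beta> \<mu>"
proof -
  have gap_l: "gap J \<beta> (shifted_means \<beta> \<sigma> \<mu> w (\<tau> * gap J \<beta> \<mu> / gap_variance J \<beta> \<sigma> w))
      = (1 - \<tau>) * gap J \<beta> \<mu>"
    unfolding gap_shifted_means using Q by (simp add: field_simps)
  have "0 < (gap J \<beta> \<mu>)^2"
    using mu by (simp add: LL_def)
  with \<open>1 < \<tau>\<close> have "gap J \<beta> \<mu> * ((1 - \<tau>) * gap J \<beta> \<mu>) < 0"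
    by (simp add: power2_eq_square mult_neg_pos mult.left_commute)
  then show ?thesis
    unfolding Alt_iff_gap_sign[OF mu] gap_l .
qed

lemma weighted_divergence_shifted_means:
  assumes sig: "\<forall>a\<in>arms. \<forall>i\<in>{1..J}. \<sigma> a i > 0"
  shows "weighted_divergence J \<sigma> \<mu> w (shifted_means \<beta> \<sigma> \<mu> ws k)
    = k^2 / 2 * gap_variance_slope J \<beta> \<sigma> ws w"
proof -
  have "w a i * gauss_kl \<sigma> a i (\<mu> a i) (shifted_means \<beta> \<sigma> \<mu> ws k a i)
      = k^2 / 2 * ((\<beta> i)^2 * (w a i * (\<sigma> a i)^2 / (ws a i)^2))"
    if "a \<in> arms" "i \<in> {1..J}" for a i
  proof -
    have "\<sigma> a i \<noteq> 0"
      using sig that by (metis less_irrefl)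
    then show ?thesis
      by (simp add: gauss_kl_def shifted_means_def power2_eq_square field_simps)
  qed
  then show ?thesis
    by (simp add: gap_variance_slope_sum_arms sum_distrib_left)
qed

text \<open>The infimum over Alt is not attained, since the gap of an alternative must change sign
  strictly; shifted means overshooting by a factor \<tau> > 1 are used instead.\<close>
lemma le_if_le_sq_mult_gt_one:
  fixes x y :: real
  assumes "\<And>\<tau>. 1 < \<tau> \<Longrightarrow> x \<le> \<tau>^2 * y"
  shows "x \<le> y"
proof (rule field_le_mult_one_interval)
  fix z :: real assume z: "0 < z" "z < 1"
  then have "1 < 1 / sqrt z"
    by (simp add: real_sqrt_lt_1_iff)
  then have "x \<le> (1 / sqrt z)^2 * y"
    by (rule assms)
  with z show "z * x \<le> y"
    by (simp add: power_divide field_simps)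
qed

lemma objective_upper_bound:
  assumes sig: "\<forall>a\<in>arms. \<forall>i\<in>{1..J}. \<sigma> a i > 0"
    and nonneg: "\<forall>a\<in>arms. \<forall>i\<in>{1..J}. 0 \<le> w a i"
    and mu: "\<mu> \<in> LL J \<beta>"
    and Q: "0 < gap_variance J \<beta> \<sigma> ws"
    and slope: "gap_variance_slope J \<beta> \<sigma> ws w \<le> gap_variance J \<beta> \<sigma> ws"
  shows "objective J \<beta> \<sigma> \<mu> w \<le> (gap J \<beta> \<mu>)^2 / (2 * gap_variance J \<beta> \<sigma> ws)"
proof (rule le_if_le_sq_mult_gt_one)
  fix \<tau> :: real assume "1 < \<tau>"
  define k where "k = \<tau> * gap J \<beta> \<mu> / gap_variance J \<beta> \<sigma> ws"
  have "bdd_below ((\<lambda>l. weighted_divergence J \<sigma> \<mu> w l) ` Alt J \<beta> \<mu>)"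
    using weighted_divergence_nonneg[OF nonneg] by (intro bdd_belowI[of _ 0]) auto
  moreover have "shifted_means \<beta> \<sigma> \<mu> ws k \<in> Alt J \<beta> \<mu>"
    unfolding k_def using Q by (intro shifted_means_in_Alt[OF mu _ \<open>1 < \<tau>\<close>]) simp
  ultimately have "objective J \<beta> \<sigma> \<mu> w \<le> weighted_divergence J \<sigma> \<mu> w (shifted_means \<beta> \<sigma> \<mu> ws k)"
    unfolding objective_def by (rule cINF_lower)
  also have "\<dots> = k^2 / 2 * gap_variance_slope J \<beta> \<sigma> ws w"
    by (rule weighted_divergence_shifted_means[OF sig])
  also have "\<dots> \<le> k^2 / 2 * gap_variance J \<beta> \<sigma> ws"
    using slope by (simp add: mult_left_mono)
  also have "\<dots> = \<tau>^2 * ((gap J \<beta> \<mu>)^2 / (2 * gap_variance J \<beta> \<sigma> ws))"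
    using Q by (simp add: k_def power2_eq_square field_simps)
  finally show "objective J \<beta> \<sigma> \<mu> w \<le> \<tau>^2 * ((gap J \<beta> \<mu>)^2 / (2 * gap_variance J \<beta> \<sigma> ws))" .
qed

lemma objective_lower_bound:
  assumes sig: "\<forall>a\<in>arms. \<forall>i\<in>{1..J}. \<sigma> a i > 0"
    and nonneg: "\<forall>a\<in>arms. \<forall>i\<in>{1..J}. 0 \<le> w a i"
    and supp: "samples_support J \<beta> w" and mu: "\<mu> \<in> LL J \<beta>"
  shows "(gap J \<beta> \<mu>)^2 / (2 * gap_variance J \<beta> \<sigma> w) \<le> objective J \<beta> \<sigma> \<mu> w"
proof -
  have "0 < gap_variance J \<beta> \<sigma> w"
    using sig nonneg supp mu by (rule gap_variance_pos)
  then have "Alt J \<beta> \<mu> \<noteq> {}"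
    using shifted_means_in_Alt[OF mu, of \<sigma> w 2] by auto
  then show ?thesis
    unfolding objective_def
    by (rule cINF_greatest) (rule weighted_divergence_ge_on_Alt[OF sig nonneg supp mu])
qed

lemma C_active_nonneg: "w \<in> C_active J \<Longrightarrow> \<forall>a\<in>arms. \<forall>i\<in>{1..J}. 0 \<le> w a i"
  by (simp add: C_active_def)

lemma Tstar_eq_and_attained:
  assumes sig: "\<forall>a\<in>arms. \<forall>i\<in>{1..J}. \<sigma> a i > 0"
    and mu: "\<mu> \<in> LL J \<beta>"
    and C: "C \<subseteq> C_active J" and ws: "ws \<in> C" and supp: "samples_support J \<beta> ws"
    and first_order: "\<forall>w\<in>C. gap_variance_slope J \<beta> \<sigma> ws w \<le> gap_variance J \<beta> \<sigma> ws"
  shows "Tstar J \<beta> \<sigma> C \<mu> = 2 * gap_variance J \<beta> \<sigma> ws / (gap J \<beta> \<mu>)^2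
    \<and> attained J \<beta> \<sigma> C \<mu> ws"
proof -
  define v where "v = (gap J \<beta> \<mu>)^2 / (2 * gap_variance J \<beta> \<sigma> ws)"
  have nonneg: "\<forall>a\<in>arms. \<forall>i\<in>{1..J}. 0 \<le> w a i" if "w \<in> C" for w
    using C that by (auto simp: C_active_nonneg)
  have Q: "0 < gap_variance J \<beta> \<sigma> ws"
    using sig nonneg[OF ws] supp mu by (rule gap_variance_pos)
  have upper: "objective J \<beta> \<sigma> \<mu> w \<le> v" if "w \<in> C" for w
    unfolding v_def using sig nonneg[OF that] mu Q first_order that by (intro objective_upper_bound) auto
  have "v \<le> objective J \<beta> \<sigma> \<mu> ws"
    unfolding v_def using sig nonneg[OF ws] supp mu by (rule objective_lower_bound)
  with upper[OF ws] have attain: "objective J \<beta> \<sigma> \<mu> ws = v"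
    by simp
  have "Tstar_inv J \<beta> \<sigma> C \<mu> = v"
    unfolding Tstar_inv_def
  proof (rule antisym)
    show "(SUP w\<in>C. objective J \<beta> \<sigma> \<mu> w) \<le> v"
      using ws upper by (auto intro: cSUP_least)
    have "bdd_above ((\<lambda>w. objective J \<beta> \<sigma> \<mu> w) ` C)"
      using upper by (intro bdd_aboveI[of _ v]) auto
    then show "v \<le> (SUP w\<in>C. objective J \<beta> \<sigma> \<mu> w)"
      using cSUP_upper[OF ws] attain by metis
  qed
  with attain ws Q show ?thesis
    by (simp add: Tstar_def attained_def v_def)
qed

lemma C_active_sum_eq: "w \<in> C_active J \<Longrightarrow> (\<Sum>i\<in>{1..J}. w 0 i + w 1 i) = 1"
  by (simp add: C_active_def sum_arms sum.distrib)

lemma gap_variance_active_weights: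
  assumes sig: "\<forall>a\<in>arms. \<forall>i\<in>{1..J}. \<sigma> a i > 0" and "0 < S"
  shows "gap_variance J \<beta> \<sigma> (\<lambda>a i. \<bar>\<beta> i\<bar> * \<sigma> a i / S)
    = S * (\<Sum>i\<in>{1..J}. \<bar>\<beta> i\<bar> * (\<sigma> 0 i + \<sigma> 1 i))"
  unfolding gap_variance_def sum_distrib_left
proof (rule sum.cong)
  fix i assume i: "i \<in> {1..J}"
  have "0 < \<sigma> 0 i" "0 < \<sigma> 1 i"
    using sig i by (auto simp: arms_def)
  moreover have "(\<beta> i)^2 = \<bar>\<beta> i\<bar> * \<bar>\<beta> i\<bar>"
    by (simp add: power2_eq_square abs_mult_self_eq)
  ultimately show "(\<beta> i)^2 * ((\<sigma> 0 i)^2 / (\<bar>\<beta> i\<bar> * \<sigma> 0 i / S) + (\<sigma> 1 i)^2 / (\<bar>\<beta> i\<bar> * \<sigma> 1 i / S))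
      = S * (\<bar>\<beta> i\<bar> * (\<sigma> 0 i + \<sigma> 1 i))"
    using \<open>0 < S\<close> by (cases "\<beta> i = 0") (simp_all add: power2_eq_square field_simps)
qed simp

lemma gap_variance_slope_active_weights_le:
  assumes sig: "\<forall>a\<in>arms. \<forall>i\<in>{1..J}. \<sigma> a i > 0" and "0 < S"
    and nonneg: "\<forall>a\<in>arms. \<forall>i\<in>{1..J}. 0 \<le> w a i"
  shows "gap_variance_slope J \<beta> \<sigma> (\<lambda>a i. \<bar>\<beta> i\<bar> * \<sigma> a i / S) w \<le> S^2 * (\<Sum>i\<in>{1..J}. w 0 i + w 1 i)"
  unfolding gap_variance_slope_def sum_distrib_left
proof (rule sum_mono)
  fix i assume i: "i \<in> {1..J}"
  have pos: "0 < \<sigma> 0 i" "0 < \<sigma> 1 i" "0 \<le> w 0 i" "0 \<le> w 1 i"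
    using sig nonneg i by (auto simp: arms_def)
  show "(\<beta> i)^2 * (w 0 i * (\<sigma> 0 i)^2 / (\<bar>\<beta> i\<bar> * \<sigma> 0 i / S)^2
      + w 1 i * (\<sigma> 1 i)^2 / (\<bar>\<beta> i\<bar> * \<sigma> 1 i / S)^2) \<le> S^2 * (w 0 i + w 1 i)"
  proof (cases "\<beta> i = 0")
    case False
    have "(\<beta> i)^2 = \<bar>\<beta> i\<bar>^2"
      by simp
    with False pos \<open>0 < S\<close> show ?thesis
      by (simp add: power_divide power_mult_distrib field_simps)
  qed (use pos in simp)
qed

lemma Tstar_active:
  assumes sig: "\<forall>a\<in>arms. \<forall>i\<in>{1..J}. \<sigma> a i > 0" and mu: "\<mu> \<in> LL J \<beta>"
  defines "S \<equiv> \<Sum>j\<in>{1..J}. \<bar>\<beta> j\<bar> * (\<sigma> 0 j + \<sigma> 1 j)"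
  shows "Tstar J \<beta> \<sigma> (C_active J) \<mu> = 2 * S^2 / (gap J \<beta> \<mu>)^2
    \<and> attained J \<beta> \<sigma> (C_active J) \<mu> (\<lambda>a i. \<bar>\<beta> i\<bar> * \<sigma> a i / S)"
proof -
  define ws where "ws = (\<lambda>a i. \<bar>\<beta> i\<bar> * \<sigma> a i / S)"
  obtain i0 where i0: "i0 \<in> {1..J}" "\<beta> i0 \<noteq> 0"
    using mu by (rule LL_imp_beta_nonzero)
  have sig_sum: "0 < \<sigma> 0 i + \<sigma> 1 i" if "i \<in> {1..J}" for i
    using sig that by (auto simp: arms_def add_pos_pos)
  have "0 < S"
    unfolding S_def
  proof (rule sum_pos2[OF _ i0(1)])
    show "0 < \<bar>\<beta> i0\<bar> * (\<sigma> 0 i0 + \<sigma> 1 i0)"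
      using i0(2) sig_sum[OF i0(1)] by simp
    show "0 \<le> \<bar>\<beta> i\<bar> * (\<sigma> 0 i + \<sigma> 1 i)" if "i \<in> {1..J}" for i
      using sig_sum[OF that] by simp
  qed simp
  have "(\<Sum>a\<in>arms. \<Sum>i\<in>{1..J}. ws a i) = S / S"
    by (simp add: ws_def S_def sum_arms sum_divide_distrib[symmetric] sum.distrib[symmetric]
        distrib_left add_divide_distrib)
  with \<open>0 < S\<close> sig have ws_C: "ws \<in> C_active J"
    by (auto simp: C_active_def ws_def less_imp_le)
  have "samples_support J \<beta> ws"
    using sig \<open>0 < S\<close> by (simp add: samples_support_def ws_def)
  moreover have Q: "gap_variance J \<beta> \<sigma> ws = S^2"
    unfolding ws_def gap_variance_active_weights[OF sig \<open>0 < S\<close>] by (simp add: S_def power2_eq_square)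
  moreover have "gap_variance_slope J \<beta> \<sigma> ws w \<le> S^2" if "w \<in> C_active J" for w
    using gap_variance_slope_active_weights_le[OF sig \<open>0 < S\<close> C_active_nonneg[OF that]]
      C_active_sum_eq[OF that] by (simp add: ws_def)
  ultimately have "Tstar J \<beta> \<sigma> (C_active J) \<mu> = 2 * gap_variance J \<beta> \<sigma> ws / (gap J \<beta> \<mu>)^2
    \<and> attained J \<beta> \<sigma> (C_active J) \<mu> ws"
    using sig mu ws_C by (intro Tstar_eq_and_attained) auto
  then show ?thesis
    unfolding Q unfolding ws_def .
qed

lemma gap_variance_prop_weights:
  assumes sig: "\<forall>a\<in>arms. \<forall>i\<in>{1..J}. \<sigma> a i > 0" and alpha_pos: "\<forall>i\<in>{1..J}. \<alpha> i > 0"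
  shows "gap_variance J \<beta> \<sigma> (\<lambda>a i. \<alpha> i * \<sigma> a i / (\<sigma> 0 i + \<sigma> 1 i))
    = (\<Sum>i\<in>{1..J}. (\<beta> i)^2 / \<alpha> i * (\<sigma> 0 i + \<sigma> 1 i)^2)"
  unfolding gap_variance_def
proof (rule sum.cong)
  fix i assume "i \<in> {1..J}"
  then have "0 < \<sigma> 0 i" "0 < \<sigma> 1 i" "0 < \<alpha> i"
    using sig alpha_pos by (auto simp: arms_def)
  then show "(\<beta> i)^2 * ((\<sigma> 0 i)^2 / (\<alpha> i * \<sigma> 0 i / (\<sigma> 0 i + \<sigma> 1 i))
      + (\<sigma> 1 i)^2 / (\<alpha> i * \<sigma> 1 i / (\<sigma> 0 i + \<sigma> 1 i)))
      = (\<beta> i)^2 / \<alpha> i * (\<sigma> 0 i + \<sigma> 1 i)^2"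
    by (simp add: power2_eq_square field_simps)
qed simp

lemma gap_variance_slope_prop_weights:
  assumes sig: "\<forall>a\<in>arms. \<forall>i\<in>{1..J}. \<sigma> a i > 0" and alpha_pos: "\<forall>i\<in>{1..J}. \<alpha> i > 0"
    and w: "\<forall>i\<in>{1..J}. w 0 i + w 1 i = \<alpha> i"
  shows "gap_variance_slope J \<beta> \<sigma> (\<lambda>a i. \<alpha> i * \<sigma> a i / (\<sigma> 0 i + \<sigma> 1 i)) w
    = (\<Sum>i\<in>{1..J}. (\<beta> i)^2 / \<alpha> i * (\<sigma> 0 i + \<sigma> 1 i)^2)"
  unfolding gap_variance_slope_def
proof (rule sum.cong)
  fix i assume i: "i \<in> {1..J}"
  then have pos: "0 < \<sigma> 0 i" "0 < \<sigma> 1 i" "0 < \<alpha> i"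
    using sig alpha_pos by (auto simp: arms_def)
  have arm: "w a i * (\<sigma> a i)^2 / (\<alpha> i * \<sigma> a i / (\<sigma> 0 i + \<sigma> 1 i))^2
      = w a i * ((\<sigma> 0 i + \<sigma> 1 i) / \<alpha> i)^2" if "0 < \<sigma> a i" for a
    using that pos by (simp add: power_divide power_mult_distrib)
  have "w 0 i + w 1 i = \<alpha> i"
    using w i by simp
  have "(\<beta> i)^2 * (w 0 i * (\<sigma> 0 i)^2 / (\<alpha> i * \<sigma> 0 i / (\<sigma> 0 i + \<sigma> 1 i))^2
      + w 1 i * (\<sigma> 1 i)^2 / (\<alpha> i * \<sigma> 1 i / (\<sigma> 0 i + \<sigma> 1 i))^2)
      = (\<beta> i)^2 * (w 0 i + w 1 i) * ((\<sigma> 0 i + \<sigma> 1 i) / \<alpha> i)^2"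
    unfolding arm[OF pos(1)] arm[OF pos(2)] by (simp add: algebra_simps)
  also have "\<dots> = (\<beta> i)^2 / \<alpha> i * (\<sigma> 0 i + \<sigma> 1 i)^2"
    using \<open>w 0 i + w 1 i = \<alpha> i\<close> pos by (simp add: power2_eq_square field_simps)
  finally show "(\<beta> i)^2 * (w 0 i * (\<sigma> 0 i)^2 / (\<alpha> i * \<sigma> 0 i / (\<sigma> 0 i + \<sigma> 1 i))^2
      + w 1 i * (\<sigma> 1 i)^2 / (\<alpha> i * \<sigma> 1 i / (\<sigma> 0 i + \<sigma> 1 i))^2)
      = (\<beta> i)^2 / \<alpha> i * (\<sigma> 0 i + \<sigma> 1 i)^2" .
qed simp

lemma Tstar_prop:
  assumes sig: "\<forall>a\<in>arms. \<forall>i\<in>{1..J}. \<sigma> a i > 0" and mu: "\<mu> \<in> LL J \<beta>"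
    and alpha_pos: "\<forall>i\<in>{1..J}. \<alpha> i > 0" and alpha_sum: "(\<Sum>i\<in>{1..J}. \<alpha> i) = 1"
  defines "P \<equiv> \<Sum>i\<in>{1..J}. (\<beta> i)^2 / \<alpha> i * (\<sigma> 0 i + \<sigma> 1 i)^2"
  shows "Tstar J \<beta> \<sigma> (C_prop J \<alpha>) \<mu> = 2 * P / (gap J \<beta> \<mu>)^2
    \<and> attained J \<beta> \<sigma> (C_prop J \<alpha>) \<mu> (\<lambda>a i. \<alpha> i * \<sigma> a i / (\<sigma> 0 i + \<sigma> 1 i))"
proof -
  define ws where "ws = (\<lambda>a i. \<alpha> i * \<sigma> a i / (\<sigma> 0 i + \<sigma> 1 i))"
  have ws_pos: "0 < ws a i" if "a \<in> arms" "i \<in> {1..J}" for a i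
    using sig alpha_pos that by (auto simp: ws_def arms_def add_pos_pos)
  have ws_sum: "\<forall>i\<in>{1..J}. ws 0 i + ws 1 i = \<alpha> i"
    using sig by (auto simp: ws_def arms_def add_divide_distrib[symmetric] distrib_left[symmetric]
        add_pos_pos less_imp_neq[symmetric])
  then have "(\<Sum>a\<in>arms. \<Sum>i\<in>{1..J}. ws a i) = 1"
    using alpha_sum by (simp add: sum_arms sum.distrib[symmetric])
  with ws_pos ws_sum have ws_C: "ws \<in> C_prop J \<alpha>"
    by (auto simp: C_prop_def C_active_def less_imp_le)
  have "samples_support J \<beta> ws"
    using ws_pos by (simp add: samples_support_def)
  moreover have Q: "gap_variance J \<beta> \<sigma> ws = P"
    unfolding ws_def P_def by (rule gap_variance_prop_weights[OF sig alpha_pos])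
  moreover have "gap_variance_slope J \<beta> \<sigma> ws w = P" if "w \<in> C_prop J \<alpha>" for w
    unfolding ws_def P_def using that
    by (intro gap_variance_slope_prop_weights[OF sig alpha_pos]) (simp add: C_prop_def)
  ultimately have "Tstar J \<beta> \<sigma> (C_prop J \<alpha>) \<mu> = 2 * gap_variance J \<beta> \<sigma> ws / (gap J \<beta> \<mu>)^2
    \<and> attained J \<beta> \<sigma> (C_prop J \<alpha>) \<mu> ws"
    using sig mu ws_C by (intro Tstar_eq_and_attained) (auto simp: C_prop_def)
  then show ?thesis
    unfolding Q unfolding ws_def .
qed

definition agnostic_arm_variance :: "nat \<Rightarrow> (nat \<Rightarrow> real) \<Rightarrow> (nat \<Rightarrow> nat \<Rightarrow> real) \<Rightarrow> (nat \<Rightarrow> real) \<Rightarrow> nat \<Rightarrow> real"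
  where "agnostic_arm_variance J \<beta> \<sigma> \<alpha> a = (\<Sum>i\<in>{1..J}. (\<beta> i)^2 * (\<sigma> a i)^2 / \<alpha> i)"

lemma gap_variance_agnostic:
  assumes "\<forall>a\<in>arms. \<forall>i\<in>{1..J}. w a i = \<alpha> i * u a"
  shows "gap_variance J \<beta> \<sigma> w = (\<Sum>a\<in>arms. agnostic_arm_variance J \<beta> \<sigma> \<alpha> a / u a)"
  unfolding gap_variance_sum_arms agnostic_arm_variance_def sum_divide_distrib
  using assms by (intro sum.cong) (simp_all add: divide_divide_eq_left)

lemma gap_variance_slope_agnostic:
  assumes "\<forall>i\<in>{1..J}. \<alpha> i \<noteq> 0"
    and "\<forall>a\<in>arms. \<forall>i\<in>{1..J}. ws a i = \<alpha> i * c a" and "\<forall>a\<in>arms. \<forall>i\<in>{1..J}. w a i = \<alpha> i * u a"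
  shows "gap_variance_slope J \<beta> \<sigma> ws w = (\<Sum>a\<in>arms. u a * agnostic_arm_variance J \<beta> \<sigma> \<alpha> a / (c a)^2)"
  unfolding gap_variance_slope_sum_arms agnostic_arm_variance_def sum_distrib_left sum_divide_distrib
  using assms by (intro sum.cong) (simp_all add: power2_eq_square field_simps)

lemma C_agnostic_subset_C_active:
  assumes alpha_pos: "\<forall>i\<in>{1..J}. \<alpha> i > 0" and alpha_sum: "(\<Sum>i\<in>{1..J}. \<alpha> i) = 1"
  shows "C_agnostic J \<alpha> \<subseteq> C_active J"
proof
  fix w assume "w \<in> C_agnostic J \<alpha>"
  then obtain u where u: "0 \<le> u 0" "0 \<le> u 1" "u 0 + u 1 = 1"
    and w: "\<forall>a\<in>arms. \<forall>i\<in>{1..J}. w a i = \<alpha> i * u a"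
    by (auto simp: C_agnostic_def)
  have "(\<Sum>a\<in>arms. \<Sum>i\<in>{1..J}. w a i) = (\<Sum>a\<in>arms. \<Sum>i\<in>{1..J}. \<alpha> i * u a)"
    using w by simp
  also have "\<dots> = 1"
    using alpha_sum u(3) by (simp add: sum_arms sum_distrib_right[symmetric] distrib_left[symmetric])
  finally show "w \<in> C_active J"
    using w u(1,2) alpha_pos by (auto simp: C_active_def arms_def)
qed

lemma Tstar_agnostic:
  assumes sig: "\<forall>a\<in>arms. \<forall>i\<in>{1..J}. \<sigma> a i > 0" and mu: "\<mu> \<in> LL J \<beta>"
    and alpha_pos: "\<forall>i\<in>{1..J}. \<alpha> i > 0" and alpha_sum: "(\<Sum>i\<in>{1..J}. \<alpha> i) = 1"
  defines "V \<equiv> (\<lambda>a. sqrt (\<Sum>j\<in>{1..J}. (\<beta> j)^2 * (\<sigma> a j)^2 / \<alpha> j))"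
  shows "Tstar J \<beta> \<sigma> (C_agnostic J \<alpha>) \<mu> = 2 * (V 0 + V 1)^2 / (gap J \<beta> \<mu>)^2
    \<and> attained J \<beta> \<sigma> (C_agnostic J \<alpha>) \<mu> (\<lambda>a i. \<alpha> i * V a / (V 0 + V 1))"
proof -
  define W where "W = V 0 + V 1"
  define ws where "ws = (\<lambda>a i. \<alpha> i * V a / W)"
  obtain i0 where i0: "i0 \<in> {1..J}" "\<beta> i0 \<noteq> 0"
    using mu by (rule LL_imp_beta_nonzero)
  have arm_variance_pos: "0 < agnostic_arm_variance J \<beta> \<sigma> \<alpha> a" if "a \<in> arms" for a
    unfolding agnostic_arm_variance_def
  proof (rule sum_pos2[OF _ i0(1)])
    have "0 < \<sigma> a i0" "0 < \<alpha> i0"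
      using i0(1) that sig alpha_pos by auto
    with i0(2) show "0 < (\<beta> i0)^2 * (\<sigma> a i0)^2 / \<alpha> i0"
      by simp
  qed (use alpha_pos in \<open>auto simp: less_imp_le\<close>)
  have V_pos: "0 < V a" and V_sq: "agnostic_arm_variance J \<beta> \<sigma> \<alpha> a = (V a)^2" if "a \<in> arms" for a
    using arm_variance_pos[OF that] by (simp_all add: V_def agnostic_arm_variance_def less_imp_le)
  have "0 < W"
    using V_pos by (simp add: W_def arms_def add_pos_pos)
  have ws_eq: "\<forall>a\<in>arms. \<forall>i\<in>{1..J}. ws a i = \<alpha> i * (V a / W)"
    by (simp add: ws_def)
  have "V 0 / W + V 1 / W = 1"
    using \<open>0 < W\<close> by (simp add: W_def add_divide_distrib[symmetric])
  with ws_eq V_pos \<open>0 < W\<close> have ws_C: "ws \<in> C_agnostic J \<alpha>"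
    unfolding C_agnostic_def by (intro CollectI exI[of _ "\<lambda>a. V a / W"]) (auto simp: arms_def less_imp_le)
  have "samples_support J \<beta> ws"
    using V_pos alpha_pos \<open>0 < W\<close> by (simp add: samples_support_def ws_def)
  moreover have Q: "gap_variance J \<beta> \<sigma> ws = W^2"
    using V_pos[of 0] V_pos[of 1] V_sq[of 0] V_sq[of 1] \<open>0 < W\<close>
    by (simp add: gap_variance_agnostic[OF ws_eq] sum_arms arms_def W_def power2_eq_square field_simps)
  moreover have "gap_variance_slope J \<beta> \<sigma> ws w = W^2" if w: "w \<in> C_agnostic J \<alpha>" for w
  proof -
    obtain u where u: "u 0 + u 1 = 1" and w_eq: "\<forall>a\<in>arms. \<forall>i\<in>{1..J}. w a i = \<alpha> i * u a"
      using w by (auto simp: C_agnostic_def)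
    have "gap_variance_slope J \<beta> \<sigma> ws w
        = (\<Sum>a\<in>arms. u a * agnostic_arm_variance J \<beta> \<sigma> \<alpha> a / (V a / W)^2)"
      by (rule gap_variance_slope_agnostic[OF _ ws_eq w_eq]) (use alpha_pos in auto)
    also have "\<dots> = (u 0 + u 1) * W^2"
      using V_pos[of 0] V_pos[of 1] V_sq[of 0] V_sq[of 1]
      by (simp add: sum_arms arms_def power_divide field_simps)
    finally show ?thesis
      using u by simp
  qed
  ultimately have "Tstar J \<beta> \<sigma> (C_agnostic J \<alpha>) \<mu> = 2 * gap_variance J \<beta> \<sigma> ws / (gap J \<beta> \<mu>)^2
    \<and> attained J \<beta> \<sigma> (C_agnostic J \<alpha>) \<mu> ws"
    using sig mu ws_C alpha_pos alpha_sum by (intro Tstar_eq_and_attained C_agnostic_subset_C_active) auto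
  then show ?thesis
    unfolding Q unfolding ws_def W_def .
qed

theorem proposition2:
  fixes J :: nat and \<alpha> \<beta> :: "nat \<Rightarrow> real" and \<sigma> \<mu> :: "nat \<Rightarrow> nat \<Rightarrow> real"
  assumes J: "J \<ge> 1"
    and alpha_pos: "\<forall>i\<in>{1..J}. \<alpha> i > 0"
    and alpha_sum: "(\<Sum>i\<in>{1..J}. \<alpha> i) = 1"
    and sigma_pos: "\<forall>a\<in>arms. \<forall>i\<in>{1..J}. \<sigma> a i > 0"
    and mu_L: "\<mu> \<in> LL J \<beta>"
  defines "\<Delta> \<equiv> wmean J \<beta> \<mu> 0 - wmean J \<beta> \<mu> 1"
    and "V \<equiv> (\<lambda>a. sqrt (\<Sum>j\<in>{1..J}. (\<beta> j)^2 * (\<sigma> a j)^2 / \<alpha> j))"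
    and "S \<equiv> (\<Sum>j\<in>{1..J}. \<bar>\<beta> j\<bar> * (\<sigma> 0 j + \<sigma> 1 j))"
  shows
    "Tstar J \<beta> \<sigma> (C_agnostic J \<alpha>) \<mu> = 2 * (V 0 + V 1)^2 / \<Delta>^2
     \<and> attained J \<beta> \<sigma> (C_agnostic J \<alpha>) \<mu> (\<lambda>a i. \<alpha> i * V a / (V 0 + V 1))
     \<and> Tstar J \<beta> \<sigma> (C_prop J \<alpha>) \<mu>
         = 2 * (\<Sum>i\<in>{1..J}. (\<beta> i)^2 / \<alpha> i * (\<sigma> 0 i + \<sigma> 1 i)^2) / \<Delta>^2
     \<and> attained J \<beta> \<sigma> (C_prop J \<alpha>) \<mu> (\<lambda>a i. \<alpha> i * \<sigma> a i / (\<sigma> 0 i + \<sigma> 1 i))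
     \<and> Tstar J \<beta> \<sigma> (C_active J) \<mu> = 2 * S^2 / \<Delta>^2
     \<and> attained J \<beta> \<sigma> (C_active J) \<mu> (\<lambda>a i. \<bar>\<beta> i\<bar> * \<sigma> a i / S)"
proof -
  have "\<Delta>^2 = (gap J \<beta> \<mu>)^2"
    by (simp add: \<Delta>_def power2_commute)
  then show ?thesis
    using Tstar_agnostic[OF sigma_pos mu_L alpha_pos alpha_sum]
      Tstar_prop[OF sigma_pos mu_L alpha_pos alpha_sum]
      Tstar_active[OF sigma_pos mu_L]
    unfolding V_def S_def by simp
qed

end
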